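(* Fix $r_0,u_0,\Lambda>0$. There is a constant $C>0$ depending on $r_0$ and $\Lambda$ (and the fixed parameters $u_0,q$) such that for every $(\mathring f,\mathring\lambda,\mathring e)\in D$, with $\mathring\mu$ the corresponding metric component, and all $r\ge0$: $$|\mathring e(r)|\le C\|\mathring f\|_{L^\infty},\qquad |\mathring\mu(r)|,\ |m(0,r)|\le C\|\mathring f\|_{L^\infty}(1+\|\mathring f\|_{L^\infty}),$$ where $m(0,r)=4\pi\int_0^rs^2\mathring\rho(s)ds$.
   Context: Units $G=c=1$; $q$ fixed charge; $r=|x|$. Constraint equations for data $(\mathring f,\mathring\lambda,\mathring\mu,\mathring e)$: $e^{-2\mathring\lambda}(2r\mathring\lambda'-1)+1=8\pi r^2\mathring\rho$, $e^{-2\mathring\lambda}(2r\mathring\mu'-1)+1=8\pi r^2\mathring p$, $\partial_r(r^2e^{\mathring\lambda}\mathring e)=qr^2e^{\mathring\lambda}\mathring M$, with $\mathring\rho=\int\mathring f\sqrt{1+|v|^2}dv+\frac12e^{2\mathring\lambda}\mathring e^2$, $\mathring p=\int(\frac{x\cdot v}r)^2\mathring f\frac{dv}{\sqrt{1+|v|^2}}-\frac12e^{2\mathring\lambda}\mathring e^2$, $\mathring M=\int\mathring f dv$, and boundary conditions $\mathring\lambda,\mathring\mu,\mathring e\to0$ as $r\to\infty$, $\mathring\lambda(0)=\mathring e(0)=0$; a regular solution has $\mathring\lambda\ge0$, $\mathring\mu\le0$, all $C^1$. For $r_0,u_0,\Lambda>0$, $D$ is the set of $(\mathring f,\mathring\lambda,\mathring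 e)$ with $\mathring f\in C^\infty(\mathbb R^6)$ nonnegative, spherically symmetric ($\mathring f(Ax,Av)=\mathring f(x,v)$, $A\in SO(3)$), $\operatorname{supp}\mathring f\subset B(r_0)\times B(u_0)$, $8\pi\int_0^rs^2\int\mathring f(s,v)\sqrt{1+|v|^2}dv\,ds<r$ for $r>0$, and $(\mathring\lambda,\mathring e)$ (with corresponding $\mathring\mu$) a regular solution of the constraints with $\|\mathring\lambda\|_{L^\infty}\le\Lambda$. *)

theory Defs
  imports "HOL-Analysis.Analysis"
begin

fun Ck :: "nat \<Rightarrow> ('a::euclidean_space \<Rightarrow> real) \<Rightarrow> bool" where
  "Ck 0 g = continuous_on UNIV g"
| "Ck (Suc k) g = ((\<forall>z. g differentiable (at z)) \<and> continuous_on UNIV g \<and>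
      (\<forall>i\<in>Basis. Ck k (\<lambda>z. frechet_derivative g (at z) i)))"

definition smooth :: "('a::euclidean_space \<Rightarrow> real) \<Rightarrow> bool" where
  "smooth g \<longleftrightarrow> (\<forall>k. Ck k g)"

text \<open>A point of R^3 with |x| = r (f is spherically symmetric, so the choice is immaterial).\<close>
definition radpt :: "real \<Rightarrow> real^3" where
  "radpt r = r *\<^sub>R axis 1 1"

definition spherically_symmetric :: "((real^3) \<times> (real^3) \<Rightarrow> real) \<Rightarrow> bool" where
  "spherically_symmetric f \<longleftrightarrow>
     (\<forall>A::real^3^3. orthogonal_matrix A \<and> det A = 1 \<longrightarrow>
        (\<forall>x v. f (A *v x, A *v v) = f (x, v)))"

definition rho_kin :: "((real^3) \<times> (real^3) \<Rightarrow> real) \<Rightarrow> real \<Rightarrow> real" where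
  "rho_kin f r = (\<integral>v. f (radpt r, v) * sqrt (1 + (norm v)^2) \<partial>lborel)"

definition rho :: "((real^3) \<times> (real^3) \<Rightarrow> real) \<Rightarrow> (real \<Rightarrow> real) \<Rightarrow> (real \<Rightarrow> real) \<Rightarrow> real \<Rightarrow> real" where
  "rho f lam e r = rho_kin f r + 1/2 * exp (2 * lam r) * (e r)^2"

definition pres :: "((real^3) \<times> (real^3) \<Rightarrow> real) \<Rightarrow> (real \<Rightarrow> real) \<Rightarrow> (real \<Rightarrow> real) \<Rightarrow> real \<Rightarrow> real" where
  "pres f lam e r =
     (\<integral>v. ((radpt r \<bullet> v) / r)^2 * f (radpt r, v) / sqrt (1 + (norm v)^2) \<partial>lborel)
     - 1/2 * exp (2 * lam r) * (e r)^2"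

definition Mdens :: "((real^3) \<times> (real^3) \<Rightarrow> real) \<Rightarrow> real \<Rightarrow> real" where
  "Mdens f r = (\<integral>v. f (radpt r, v) \<partial>lborel)"

definition C1_halfline :: "(real \<Rightarrow> real) \<Rightarrow> (real \<Rightarrow> real) \<Rightarrow> bool" where
  "C1_halfline g g' \<longleftrightarrow>
     (\<forall>r\<ge>0. (g has_real_derivative g' r) (at r within {0..})) \<and> continuous_on {0..} g'"

definition regular_solution ::
  "real \<Rightarrow> ((real^3) \<times> (real^3) \<Rightarrow> real) \<Rightarrow> (real \<Rightarrow> real) \<Rightarrow> (real \<Rightarrow> real) \<Rightarrow> (real \<Rightarrow> real) \<Rightarrow> bool" where
  "regular_solution q f lam mu e \<longleftrightarrow>
     (\<exists>lam' mu' e'. C1_halfline lam lam' \<and> C1_halfline mu mu' \<and> C1_halfline e e' \<and>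
       (\<forall>r>0. exp (-2 * lam r) * (2 * r * lam' r - 1) + 1 = 8 * pi * r^2 * rho f lam e r) \<and>
       (\<forall>r>0. exp (-2 * lam r) * (2 * r * mu' r - 1) + 1 = 8 * pi * r^2 * pres f lam e r) \<and>
       (\<forall>r>0. ((\<lambda>s. s^2 * exp (lam s) * e s) has_real_derivative
                 q * r^2 * exp (lam r) * Mdens f r) (at r))) \<and>
     (lam \<longlongrightarrow> 0) at_top \<and> (mu \<longlongrightarrow> 0) at_top \<and> (e \<longlongrightarrow> 0) at_top \<and>
     lam 0 = 0 \<and> e 0 = 0 \<and>
     (\<forall>r\<ge>0. lam r \<ge> 0) \<and> (\<forall>r\<ge>0. mu r \<le> 0)"

text \<open>The set D (with the corresponding \<mu> made explicit).\<close>
definition in_D ::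
  "real \<Rightarrow> real \<Rightarrow> real \<Rightarrow> real \<Rightarrow> ((real^3) \<times> (real^3) \<Rightarrow> real) \<Rightarrow> (real \<Rightarrow> real) \<Rightarrow> (real \<Rightarrow> real) \<Rightarrow> (real \<Rightarrow> real) \<Rightarrow> bool" where
  "in_D q r0 u0 Lam f lam mu e \<longleftrightarrow>
     smooth f \<and> (\<forall>z. f z \<ge> 0) \<and> spherically_symmetric f \<and>
     closure {z. f z \<noteq> 0} \<subseteq> ball 0 r0 \<times> ball 0 u0 \<and>
     (\<forall>r>0. 8 * pi * integral {0..r} (\<lambda>s. s^2 * rho_kin f s) < r) \<and>
     regular_solution q f lam mu e \<and>
     (\<forall>r\<ge>0. \<bar>lam r\<bar> \<le> Lam)"

definition sup_norm :: "((real^3) \<times> (real^3) \<Rightarrow> real) \<Rightarrow> real" where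
  "sup_norm f = (SUP z. \<bar>f z\<bar>)"

definition mass :: "((real^3) \<times> (real^3) \<Rightarrow> real) \<Rightarrow> (real \<Rightarrow> real) \<Rightarrow> (real \<Rightarrow> real) \<Rightarrow> real \<Rightarrow> real" where
  "mass f lam e r = 4 * pi * integral {0..r} (\<lambda>s. s^2 * rho f lam e s)"

end

theory Submission
  imports Defs
begin

(* Let N be the sup norm of f, whose support lies in |x| < r0, |v| < u0. Every velocity moment
   of f is then O(N) and vanishes for r >= r0.
   By the Maxwell equation, r^2 e^lam e has derivative O(N r^2), vanishing beyond r0, so
   r^2 |e| <= C N min(r, r0)^3; as lam >= 0 this gives |e| <= C N and r |e| (r0 + r) <= C N.
   The first Einstein equation identifies m(r) with r (1 - e^(-2 lam)) / 2, and the decay of e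
   gives 4 pi r^2 rho <= C N (1 + N) / (r0 + r)^2, which integrates to m <= C N (1 + N).
   In the second Einstein equation the electric part of the pressure is nonpositive, so
   mu' <= C N r, and mu' <= 0 beyond r0; since mu <= 0 and mu -> 0 at infinity, mu vanishes
   beyond r0, and integrating back from r0 gives |mu| <= C N. *)

lemma DERIV_le_imp_increment_le:
  fixes F :: "real \<Rightarrow> real"
  assumes "a \<le> b" and "continuous_on {a..b} F"
    and "\<And>x. a < x \<Longrightarrow> x < b \<Longrightarrow> (F has_real_derivative F' x) (at x)"
    and "\<And>x. a < x \<Longrightarrow> x < b \<Longrightarrow> F' x \<le> c"
  shows "F b - F a \<le> c * (b - a)"
proof -
  have "(\<lambda>x. F x - c * x) b \<le> (\<lambda>x. F x - c * x) a"
  proof (rule DERIV_nonpos_imp_decreasing_open[OF assms(1)])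
    show "continuous_on {a..b} (\<lambda>x. F x - c * x)"
      using assms(2) by (intro continuous_intros)
    show "\<exists>y. ((\<lambda>x. F x - c * x) has_real_derivative y) (at x) \<and> y \<le> 0"
      if "a < x" "x < b" for x
      using assms(3,4)[OF that] by (auto intro!: derivative_eq_intros)
  qed
  then show ?thesis by (simp add: algebra_simps)
qed

lemma DERIV_abs_le_imp_increment_abs_le:
  fixes F :: "real \<Rightarrow> real"
  assumes "a \<le> b" and "continuous_on {a..b} F"
    and "\<And>x. a < x \<Longrightarrow> x < b \<Longrightarrow> (F has_real_derivative F' x) (at x)"
    and "\<And>x. a < x \<Longrightarrow> x < b \<Longrightarrow> \<bar>F' x\<bar> \<le> c"
  shows "\<bar>F b - F a\<bar> \<le> c * (b - a)"
proof -
  have "F b - F a \<le> c * (b - a)"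
    using assms by (intro DERIV_le_imp_increment_le[of a b F F']) (auto simp: abs_le_iff)
  moreover have "- F b - - F a \<le> c * (b - a)"
    using assms by (intro DERIV_le_imp_increment_le[of a b _ "\<lambda>x. - F' x"])
      (auto intro!: continuous_intros derivative_intros simp: abs_le_iff)
  ultimately show ?thesis by linarith
qed

lemma DERIV_nonpos_tendsto_0_imp_eq_0:
  fixes g :: "real \<Rightarrow> real"
  assumes "continuous_on {a..} g"
    and "\<And>x. a < x \<Longrightarrow> (g has_real_derivative g' x) (at x)"
    and "\<And>x. a < x \<Longrightarrow> g' x \<le> 0"
    and "(g \<longlongrightarrow> 0) at_top" and "g s \<le> 0" and "a \<le> s"
  shows "g s = 0"
proof -
  have "g t \<le> g s" if "s \<le> t" for t
  proof (rule DERIV_nonpos_imp_decreasing_open[OF that])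
    show "continuous_on {s..t} g"
      by (rule continuous_on_subset[OF assms(1)]) (use assms(6) in auto)
  qed (use assms(2,3,6) in force)
  then have "eventually (\<lambda>t. g t \<le> g s) at_top"
    unfolding eventually_at_top_linorder by blast
  then have "0 \<le> g s" using tendsto_upperbound[OF assms(4)] by simp
  with assms(5) show ?thesis by simp
qed

lemma abs_le_cube_of_DERIV_bound:
  fixes h :: "real \<Rightarrow> real"
  assumes "continuous_on {0..} h" and "h 0 = 0"
    and "\<And>x. 0 < x \<Longrightarrow> (h has_real_derivative h' x) (at x)"
    and "\<And>x. 0 < x \<Longrightarrow> \<bar>h' x\<bar> \<le> B * x^2"
    and "\<And>x. R \<le> x \<Longrightarrow> h' x = 0"
    and "0 \<le> R" and "0 \<le> r"
  shows "\<bar>h r\<bar> \<le> B * (min r R)^3"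
proof -
  define m where "m = min r R"
  have "0 \<le> B" using assms(4)[of 1] by simp
  have cont: "continuous_on {a..b} h" if "0 \<le> a" for a b
    using assms(1) by (rule continuous_on_subset) (use that in auto)
  have "\<bar>h m - h 0\<bar> \<le> B * m^2 * (m - 0)"
  proof (rule DERIV_abs_le_imp_increment_abs_le[OF _ cont])
    show "\<bar>h' x\<bar> \<le> B * m^2" if "0 < x" "x < m" for x
      using assms(4)[of x] mult_left_mono[OF power_mono[of x m 2] \<open>0 \<le> B\<close>] that by simp
  qed (use assms(3,6,7) in \<open>auto simp: m_def\<close>)
  moreover have "\<bar>h r - h m\<bar> \<le> 0 * (r - m)"
  proof (rule DERIV_abs_le_imp_increment_abs_le[OF _ cont])
    show "\<bar>h' x\<bar> \<le> 0" if "m < x" "x < r" for x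
      using assms(5)[of x] that by (simp add: m_def)
  qed (use assms(3,6,7) in \<open>auto simp: m_def\<close>)
  ultimately show ?thesis
    using assms(2) by (simp add: m_def power3_eq_cube power2_eq_square)
qed

lemma increment_le_of_DERIV_le_inverse_square:
  fixes G :: "real \<Rightarrow> real"
  assumes "continuous_on {0..r} G"
    and "\<And>x. 0 < x \<Longrightarrow> x < r \<Longrightarrow> (G has_real_derivative g x) (at x)"
    and "\<And>x. 0 < x \<Longrightarrow> x < r \<Longrightarrow> g x \<le> W / (R + x)^2"
    and "0 \<le> W" and "0 < R" and "0 \<le> r"
  shows "G r - G 0 \<le> W / R"
proof -
  define P where "P x = G x - W * (1 / R - 1 / (R + x))" for x
  have "P r - P 0 \<le> 0 * (r - 0)"
  proof (rule DERIV_le_imp_increment_le[OF assms(6)])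
    show "continuous_on {0..r} P"
      unfolding P_def using assms(1,5) by (intro continuous_intros) auto
    show "(P has_real_derivative g x - W / (R + x)^2) (at x)" if "0 < x" "x < r" for x
      unfolding P_def using assms(2)[OF that] that assms(5)
      by (auto intro!: derivative_eq_intros simp: power2_eq_square)
    show "g x - W / (R + x)^2 \<le> 0" if "0 < x" "x < r" for x
      using assms(3)[OF that] by simp
  qed
  then have "G r - G 0 \<le> W * (1 / R - 1 / (R + r))" unfolding P_def by simp
  also have "\<dots> \<le> W * (1 / R)"
    using assms(4-6) by (intro mult_left_mono) auto
  finally show ?thesis by simp
qed

lemma mass_function_DERIV:
  assumes "(lam has_real_derivative l') (at x)"
    and "exp (-2 * lam x) * (2 * x * l' - 1) + 1 = 8 * pi * x^2 * d"
  shows "((\<lambda>s. s * (1 - exp (-2 * lam s)) / 2) has_real_derivative 4 * pi * x^2 * d) (at x)"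
proof -
  have "((\<lambda>s. s * (1 - exp (-2 * lam s)) / 2) has_real_derivative
      ((1 - exp (-2 * lam x)) + x * (exp (-2 * lam x) * (2 * l'))) / 2) (at x)"
    using assms(1) by (auto intro!: derivative_eq_intros simp: field_simps)
  moreover have "(1 - exp (-2 * lam x)) + x * (exp (-2 * lam x) * (2 * l'))
      = exp (-2 * lam x) * (2 * x * l' - 1) + 1"
    by (simp add: algebra_simps)
  ultimately show ?thesis unfolding assms(2) by (simp add: mult_ac)
qed

lemma mu_equation_deriv_le:
  fixes r l m' p P Lam :: real
  assumes "exp (-2 * l) * (2 * r * m' - 1) + 1 = 8 * pi * r^2 * p"
    and "0 \<le> l" and "l \<le> Lam" and "p \<le> P" and "0 \<le> P" and "0 < r"
  shows "m' \<le> exp (2 * Lam) * 4 * pi * r * P"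
proof -
  define E where "E = exp (2 * l)"
  have "E * exp (-2 * l) = 1" unfolding E_def by (simp flip: exp_add)
  then have "2 * r * m' - 1 = E * (exp (-2 * l) * (2 * r * m' - 1))"
    by (simp only: mult.assoc[symmetric]) simp
  also have "\<dots> = E * (8 * pi * r^2 * p - 1)"
    using assms(1) by (simp add: eq_diff_eq)
  finally have "2 * r * m' = E * (8 * pi * r^2 * p) + (1 - E)"
    by (simp add: algebra_simps)
  also have "\<dots> \<le> E * (8 * pi * r^2 * P)"
  proof -
    have "1 \<le> E" using assms(2) by (simp add: E_def)
    moreover have "E * (8 * pi * r^2 * p) \<le> E * (8 * pi * r^2 * P)"
      using assms(4) \<open>1 \<le> E\<close> by (intro mult_left_mono) auto
    ultimately show ?thesis by linarith
  qed
  also have "\<dots> \<le> exp (2 * Lam) * (8 * pi * r^2 * P)"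
    using assms(3,5) by (intro mult_right_mono) (simp_all add: E_def)
  also have "\<dots> = 2 * r * (exp (2 * Lam) * 4 * pi * r * P)"
    by (simp add: power2_eq_square)
  finally show ?thesis using assms(6) by (simp add: mult_ac)
qed

lemma C1_halfline_continuous_on: "C1_halfline g g' \<Longrightarrow> continuous_on {0..} g"
  unfolding C1_halfline_def by (intro DERIV_continuous_on) auto

lemma C1_halfline_DERIV:
  assumes "C1_halfline g g'" and "0 < r"
  shows "(g has_real_derivative g' r) (at r)"
proof -
  have "(g has_real_derivative g' r) (at r within {0..})"
    using assms unfolding C1_halfline_def by simp
  moreover have "at r within {0..} = at r" using assms(2) by (intro at_within_interior) simp
  ultimately show ?thesis by simp
qed

lemma abs_le_sup_norm:
  assumes "continuous_on UNIV f" and "bounded {z. f z \<noteq> 0}"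
  shows "\<bar>f z\<bar> \<le> sup_norm f"
proof -
  let ?S = "closure {z. f z \<noteq> 0}"
  have "compact (f ` ?S)"
    using assms by (intro compact_continuous_image continuous_on_subset[OF assms(1)])
      (auto simp: compact_eq_bounded_closed)
  then have "bounded (f ` ?S)" by (rule compact_imp_bounded)
  then obtain B where B: "\<And>y. y \<in> f ` ?S \<Longrightarrow> \<bar>y\<bar> \<le> B"
    by (auto simp: bounded_real)
  have "\<bar>f y\<bar> \<le> max B 0" for y
    using B[of "f y"] closure_subset[of "{z. f z \<noteq> 0}"] by (cases "f y = 0") auto
  then have "bdd_above (range (\<lambda>z. \<bar>f z\<bar>))" by (intro bdd_aboveI2)
  then show ?thesis unfolding sup_norm_def by (intro cSUP_upper) auto
qed

lemma integral_weighted_le_measure_ball: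
  fixes g w :: "'a::euclidean_space \<Rightarrow> real"
  assumes "\<And>v. 0 \<le> g v" and "\<And>v. g v \<le> N" and "\<And>v. g v \<noteq> 0 \<Longrightarrow> norm v < u"
    and "\<And>v. 0 \<le> w v" and "\<And>v. norm v < u \<Longrightarrow> w v \<le> c"
  shows "(\<integral>v. g v * w v \<partial>lborel) \<le> N * c * measure lborel (ball (0::'a) u)"
proof -
  have "emeasure lborel (ball (0::'a) u) < \<infinity>" by (intro emeasure_bounded_finite) simp
  then have int: "integrable lborel (\<lambda>v. N * c * indicator (ball (0::'a) u) v :: real)"
    by (simp add: integrable_indicator_iff)
  have le: "g v * w v \<le> N * c * indicator (ball 0 u) v" for v
  proof (cases "g v = 0")
    case True
    have "0 \<le> N" using assms(1,2) order_trans by blast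
    moreover have "norm v < u \<Longrightarrow> 0 \<le> c" using assms(4,5)[of v] by simp
    ultimately show ?thesis using True by (simp add: indicator_def)
  next
    case False
    then have "norm v < u" by (rule assms(3))
    then have "g v * w v \<le> N * c" using assms by (intro mult_mono) (auto intro: order_trans)
    then show ?thesis using \<open>norm v < u\<close> by (simp add: indicator_def)
  qed
  have "0 \<le> N * c * indicator (ball (0::'a) u) v" for v
    using le[of v] assms(1,4)[of v] by (meson order_trans zero_le_mult_iff)
  then have "(\<integral>v. g v * w v \<partial>lborel) \<le> (\<integral>v. N * c * indicator (ball (0::'a) u) v \<partial>lborel)"
    using le by (intro integral_mono'[OF int])
  then show ?thesis by simp
qed

abbreviation vol_ball :: "real \<Rightarrow> real" where
  "vol_ball u \<equiv> measure lborel (ball (0::real^3) u)"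

locale D_element =
  fixes q r0 u0 Lam :: real
    and f :: "(real^3) \<times> (real^3) \<Rightarrow> real"
    and lam mu e :: "real \<Rightarrow> real"
  assumes r0_pos: "0 < r0"
    and in_D: "in_D q r0 u0 Lam f lam mu e"
begin

abbreviation N :: real where "N \<equiv> sup_norm f"

lemma f_nonneg: "0 \<le> f z"
  using in_D unfolding in_D_def by blast

lemma f_support:
  assumes "f (x, v) \<noteq> 0"
  shows "norm x < r0" and "norm v < u0"
proof -
  have "closure {z. f z \<noteq> 0} \<subseteq> ball 0 r0 \<times> ball 0 u0"
    using in_D unfolding in_D_def by (elim conjE)
  moreover have "(x, v) \<in> closure {z. f z \<noteq> 0}" using assms by (simp add: closure_def)
  ultimately have "(x, v) \<in> ball 0 r0 \<times> ball 0 u0" by (rule subsetD)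
  then show "norm x < r0" and "norm v < u0" by simp_all
qed

lemma f_le_N: "f z \<le> N"
proof -
  have "continuous_on UNIV f"
    using in_D unfolding in_D_def smooth_def by (metis Ck.simps(1))
  moreover have "bounded {z. f z \<noteq> 0}"
  proof (rule bounded_subset)
    show "bounded (ball (0::real^3) r0 \<times> ball (0::real^3) u0)" by (intro bounded_Times) auto
    show "{z. f z \<noteq> 0} \<subseteq> ball 0 r0 \<times> ball 0 u0" using f_support by fastforce
  qed
  ultimately have "\<bar>f z\<bar> \<le> N" by (rule abs_le_sup_norm)
  then show ?thesis by simp
qed

lemma N_nonneg: "0 \<le> N"
  using f_nonneg f_le_N order_trans by blast

lemma f_radpt_eq_0: "r0 \<le> s \<Longrightarrow> f (radpt s, v) = 0"
  using f_support(1)[of "radpt s" v] r0_pos by (force simp: radpt_def)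

lemma regular: "regular_solution q f lam mu e"
  using in_D unfolding in_D_def by (elim conjE)

lemma lam_nonneg: "0 \<le> r \<Longrightarrow> 0 \<le> lam r"
  using regular unfolding regular_solution_def by blast

lemma lam_le: "0 \<le> r \<Longrightarrow> lam r \<le> Lam"
  using in_D unfolding in_D_def by (elim conjE) (simp add: abs_le_iff)

lemma lam_equation:
  obtains lam' where "C1_halfline lam lam'"
    and "\<And>r. 0 < r \<Longrightarrow> exp (-2 * lam r) * (2 * r * lam' r - 1) + 1 = 8 * pi * r^2 * rho f lam e r"
  using regular unfolding regular_solution_def by blast

lemma mu_equation:
  obtains mu' where "C1_halfline mu mu'"
    and "\<And>r. 0 < r \<Longrightarrow> exp (-2 * lam r) * (2 * r * mu' r - 1) + 1 = 8 * pi * r^2 * pres f lam e r"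
  using regular unfolding regular_solution_def by blast

lemma charge_equation:
  "0 < r \<Longrightarrow> ((\<lambda>s. s^2 * exp (lam s) * e s) has_real_derivative
     q * r^2 * exp (lam r) * Mdens f r) (at r)"
  using regular unfolding regular_solution_def by blast

lemma e_continuous: "continuous_on {0..} e"
  using regular C1_halfline_continuous_on unfolding regular_solution_def by blast

lemma e_0: "e 0 = 0"
  using regular unfolding regular_solution_def by blast

lemma mu_nonpos: "0 \<le> r \<Longrightarrow> mu r \<le> 0"
  using regular unfolding regular_solution_def by blast

lemma mu_tendsto_0: "(mu \<longlongrightarrow> 0) at_top"
  using regular unfolding regular_solution_def by blast

lemma velocity_integral_le:
  assumes "\<And>v. 0 \<le> w v" and "\<And>v. norm v < u0 \<Longrightarrow> w v \<le> c"
  shows "(\<integral>v. f (radpt s, v) * w v \<partial>lborel) \<le> N * c * vol_ball u0"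
  using f_nonneg f_le_N f_support(2) assms by (rule integral_weighted_le_measure_ball)

lemma Mdens_abs_le: "\<bar>Mdens f s\<bar> \<le> N * vol_ball u0"
proof -
  have "0 \<le> Mdens f s" unfolding Mdens_def by (simp add: f_nonneg)
  moreover have "Mdens f s \<le> N * 1 * vol_ball u0"
    using velocity_integral_le[of "\<lambda>_. 1" 1 s] by (simp add: Mdens_def)
  ultimately show ?thesis by simp
qed

lemma rho_kin_le: "rho_kin f s \<le> N * sqrt (1 + u0^2) * vol_ball u0"
  unfolding rho_kin_def
  by (rule velocity_integral_le) (simp_all add: power_strict_mono less_imp_le)

lemma Mdens_eq_0: "r0 \<le> s \<Longrightarrow> Mdens f s = 0"
  by (simp add: Mdens_def f_radpt_eq_0)

lemma rho_kin_eq_0: "r0 \<le> s \<Longrightarrow> rho_kin f s = 0"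
  by (simp add: rho_kin_def f_radpt_eq_0)

lemma pres_le:
  assumes "0 < s"
  shows "pres f lam e s \<le> (if s < r0 then N * u0^2 * vol_ball u0 else 0)"
proof -
  define w where "w v = ((radpt s \<bullet> v) / s)^2 / sqrt (1 + (norm v)^2)" for v
  have "pres f lam e s \<le> (\<integral>v. f (radpt s, v) * w v \<partial>lborel)"
    unfolding pres_def w_def by (simp add: mult.commute)
  also have "\<dots> \<le> (if s < r0 then N * u0^2 * vol_ball u0 else 0)"
  proof (cases "s < r0")
    case True
    have "w v \<le> u0^2" if "norm v < u0" for v
    proof -
      have "\<bar>radpt s \<bullet> v\<bar> \<le> s * norm v"
        using Cauchy_Schwarz_ineq2[of "radpt s" v] assms by (simp add: radpt_def)
      also have "\<dots> \<le> s * u0" using assms that by simp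
      finally have "\<bar>(radpt s \<bullet> v) / s\<bar> \<le> u0"
        using assms by (simp add: divide_le_eq mult.commute)
      then have "((radpt s \<bullet> v) / s)^2 \<le> u0^2"
        by (metis abs_ge_zero power2_abs power_mono)
      moreover have "w v \<le> ((radpt s \<bullet> v) / s)^2 / 1"
        unfolding w_def by (intro divide_left_mono) (simp_all add: add_pos_nonneg)
      ultimately show ?thesis by simp
    qed
    moreover have "0 \<le> w v" for v unfolding w_def by simp
    ultimately show ?thesis using True velocity_integral_le[of w "u0^2" s] by simp
  next
    case False
    then show ?thesis by (simp add: f_radpt_eq_0)
  qed
  finally show ?thesis .
qed

lemma charge_le_cube:
  assumes "0 \<le> r"
  shows "r^2 * \<bar>e r\<bar> \<le> \<bar>q\<bar> * exp Lam * N * vol_ball u0 * (min r r0)^3"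
proof -
  obtain lam' where lam: "C1_halfline lam lam'" by (rule lam_equation)
  define h where "h s = s^2 * exp (lam s) * e s" for s
  have "\<bar>h r\<bar> \<le> \<bar>q\<bar> * exp Lam * N * vol_ball u0 * (min r r0)^3"
  proof (rule abs_le_cube_of_DERIV_bound[where h' = "\<lambda>s. q * s^2 * exp (lam s) * Mdens f s"])
    show "continuous_on {0..} h"
      unfolding h_def using C1_halfline_continuous_on[OF lam] e_continuous
      by (intro continuous_intros)
    show "(h has_real_derivative q * x^2 * exp (lam x) * Mdens f x) (at x)" if "0 < x" for x
      using charge_equation[OF that] by (simp add: h_def[abs_def])
    show "\<bar>q * x^2 * exp (lam x) * Mdens f x\<bar> \<le> \<bar>q\<bar> * exp Lam * N * vol_ball u0 * x^2"
      if "0 < x" for x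
    proof -
      have "\<bar>q * x^2 * exp (lam x) * Mdens f x\<bar> = \<bar>q\<bar> * x^2 * exp (lam x) * \<bar>Mdens f x\<bar>"
        by (simp add: abs_mult)
      also have "\<dots> \<le> \<bar>q\<bar> * x^2 * exp Lam * (N * vol_ball u0)"
        using that lam_le[of x] Mdens_abs_le[of x] by (intro mult_mono) auto
      finally show ?thesis by (simp add: mult_ac)
    qed
  qed (use Mdens_eq_0 r0_pos assms in \<open>auto simp: h_def\<close>)
  moreover have "r^2 * \<bar>e r\<bar> \<le> \<bar>h r\<bar>"
  proof -
    have "1 \<le> exp (lam r)" using lam_nonneg[OF assms] by simp
    then have "\<bar>e r\<bar> \<le> exp (lam r) * \<bar>e r\<bar>"
      using mult_right_mono[of 1 "exp (lam r)" "\<bar>e r\<bar>"] by simp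
    then have "r^2 * \<bar>e r\<bar> \<le> r^2 * (exp (lam r) * \<bar>e r\<bar>)"
      by (intro mult_left_mono) simp_all
    then show ?thesis by (simp add: h_def abs_mult mult_ac)
  qed
  ultimately show ?thesis by linarith
qed

lemma abs_e_le:
  assumes "0 \<le> r"
  shows "\<bar>e r\<bar> \<le> \<bar>q\<bar> * exp Lam * vol_ball u0 * r0 * N"
proof (cases "r = 0")
  case True
  then show ?thesis using e_0 N_nonneg r0_pos by simp
next
  case False
  then have "0 < r" using assms by simp
  define B where "B = \<bar>q\<bar> * exp Lam * N * vol_ball u0"
  have "0 \<le> B" unfolding B_def using N_nonneg by simp
  have "(min r r0)^3 \<le> r^2 * r0"
    unfolding power3_eq_cube power2_eq_square using \<open>0 < r\<close> r0_pos
    by (intro mult_mono) auto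
  have "r^2 * \<bar>e r\<bar> \<le> B * (min r r0)^3"
    using charge_le_cube[OF assms] by (simp add: B_def)
  also have "\<dots> \<le> B * (r^2 * r0)"
    using \<open>(min r r0)^3 \<le> r^2 * r0\<close> \<open>0 \<le> B\<close> by (rule mult_left_mono)
  finally have "r^2 * \<bar>e r\<bar> \<le> r^2 * (B * r0)" by (simp add: mult_ac)
  then show ?thesis using \<open>0 < r\<close> by (simp add: B_def mult_ac)
qed

lemma e_decay:
  assumes "0 < r"
  shows "r * \<bar>e r\<bar> * (r0 + r) \<le> 2 * (\<bar>q\<bar> * exp Lam * N * vol_ball u0) * r0^3"
proof -
  define B where "B = \<bar>q\<bar> * exp Lam * N * vol_ball u0"
  have "0 \<le> B" unfolding B_def using N_nonneg by simp
  have "(min r r0)^3 * (r0 + r) \<le> r * (2 * r0^3)"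
  proof (cases "r \<le> r0")
    case True
    have "r^2 * (r0 + r) \<le> r0^2 * (2 * r0)"
      using True assms by (intro mult_mono power_mono) auto
    then have "r * (r^2 * (r0 + r)) \<le> r * (r0^2 * (2 * r0))"
      using assms by (intro mult_left_mono) auto
    then show ?thesis using True by (simp add: power2_eq_square power3_eq_cube mult_ac)
  next
    case False
    then show ?thesis using r0_pos by (simp add: mult_left_mono)
  qed
  have "r * (r * \<bar>e r\<bar> * (r0 + r)) = r^2 * \<bar>e r\<bar> * (r0 + r)"
    by (simp add: power2_eq_square mult_ac)
  also have "\<dots> \<le> B * (min r r0)^3 * (r0 + r)"
    using charge_le_cube[of r] assms r0_pos by (intro mult_right_mono) (simp_all add: B_def)
  also have "\<dots> \<le> B * (r * (2 * r0^3))"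
    using mult_left_mono[OF \<open>(min r r0)^3 * (r0 + r) \<le> r * (2 * r0^3)\<close> \<open>0 \<le> B\<close>]
    by (simp add: mult.assoc)
  finally have "r * (r * \<bar>e r\<bar> * (r0 + r)) \<le> r * (2 * B * r0^3)" by (simp add: mult_ac)
  then show ?thesis using assms by (simp add: B_def)
qed

lemma mu_abs_le:
  assumes "0 \<le> r"
  shows "\<bar>mu r\<bar> \<le> exp (2 * Lam) * 4 * pi * r0^2 * u0^2 * vol_ball u0 * N"
proof -
  obtain mu' where mu: "C1_halfline mu mu'"
    and eq: "\<And>r. 0 < r \<Longrightarrow>
      exp (-2 * lam r) * (2 * r * mu' r - 1) + 1 = 8 * pi * r^2 * pres f lam e r"
    using mu_equation by blast
  define D where "D = exp (2 * Lam) * 4 * pi * r0 * (N * u0^2 * vol_ball u0)"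
  have "0 \<le> D" unfolding D_def using N_nonneg r0_pos by simp
  have mu'_le: "mu' x \<le> (if x < r0 then D else 0)" if "0 < x" for x
  proof -
    let ?P = "if x < r0 then N * u0^2 * vol_ball u0 else 0"
    have "mu' x \<le> exp (2 * Lam) * 4 * pi * x * ?P"
      using that N_nonneg
      by (intro mu_equation_deriv_le[OF eq lam_nonneg lam_le pres_le]) simp_all
    also have "\<dots> \<le> (if x < r0 then D else 0)"
      unfolding D_def using that N_nonneg by (auto intro!: mult_right_mono)
    finally show ?thesis .
  qed
  have cont: "continuous_on {a..b} mu" if "0 \<le> a" for a b
    by (rule continuous_on_subset[OF C1_halfline_continuous_on[OF mu]]) (use that in auto)
  have vanish: "mu s = 0" if "r0 \<le> s" for s
  proof (rule DERIV_nonpos_tendsto_0_imp_eq_0[OF _ _ _ mu_tendsto_0 mu_nonpos that])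
    show "continuous_on {r0..} mu"
      by (rule continuous_on_subset[OF C1_halfline_continuous_on[OF mu]]) (use r0_pos in auto)
    show "(mu has_real_derivative mu' x) (at x)" if "r0 < x" for x
      using C1_halfline_DERIV[OF mu] that r0_pos by simp
    show "mu' x \<le> 0" if "r0 < x" for x
      using mu'_le[of x] that r0_pos by simp
  qed (use that r0_pos in simp)
  have "\<bar>mu r\<bar> \<le> D * r0"
  proof (cases "r0 \<le> r")
    case True
    then show ?thesis using vanish \<open>0 \<le> D\<close> r0_pos by simp
  next
    case False
    have "mu r0 - mu r \<le> D * (r0 - r)"
    proof (rule DERIV_le_imp_increment_le[OF _ cont[OF assms]])
      show "(mu has_real_derivative mu' x) (at x)" if "r < x" "x < r0" for x
        using C1_halfline_DERIV[OF mu] that assms by simp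
      show "mu' x \<le> D" if "r < x" "x < r0" for x
        using mu'_le[of x] that assms by simp
    qed (use False in simp)
    moreover have "D * (r0 - r) \<le> D * r0" using assms \<open>0 \<le> D\<close> by (simp add: mult_left_mono)
    ultimately show ?thesis using vanish[of r0] mu_nonpos[OF assms] by simp
  qed
  then show ?thesis by (simp add: D_def power2_eq_square mult_ac)
qed

lemma mass_eq:
  assumes "0 \<le> r"
  shows "mass f lam e r = r * (1 - exp (-2 * lam r)) / 2"
proof -
  obtain lam' where lam: "C1_halfline lam lam'"
    and eq: "\<And>r. 0 < r \<Longrightarrow>
      exp (-2 * lam r) * (2 * r * lam' r - 1) + 1 = 8 * pi * r^2 * rho f lam e r"
    using lam_equation by blast
  define G where "G s = s * (1 - exp (-2 * lam s)) / 2 / (4 * pi)" for s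
  have "((\<lambda>s. s^2 * rho f lam e s) has_integral G r - G 0) {0..r}"
  proof (rule fundamental_theorem_of_calculus_interior[OF assms])
    show "continuous_on {0..r} G"
      unfolding G_def
      by (intro continuous_intros continuous_on_subset[OF C1_halfline_continuous_on[OF lam]]) auto
    show "(G has_vector_derivative x^2 * rho f lam e x) (at x)" if "x \<in> {0<..<r}" for x
    proof -
      have "x > 0" using that by simp
      have "(G has_real_derivative 4 * pi * x^2 * rho f lam e x / (4 * pi)) (at x)"
        unfolding G_def[abs_def]
        by (intro DERIV_cdivide mass_function_DERIV[OF C1_halfline_DERIV[OF lam] eq] \<open>x > 0\<close>)
      then show ?thesis by (simp add: has_real_derivative_iff_has_vector_derivative)
    qed
  qed
  then show ?thesis unfolding mass_def G_def by (simp add: integral_unique)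
qed

lemma mass_nonneg: "0 \<le> r \<Longrightarrow> 0 \<le> mass f lam e r"
  using lam_nonneg[of r] by (simp add: mass_eq)

lemma rho_weighted_le:
  assumes "0 < s"
  shows "s^2 * rho f lam e s * (r0 + s)^2 \<le> 4 * r0^4 * (N * sqrt (1 + u0^2) * vol_ball u0)
    + 2 * exp (2 * Lam) * (\<bar>q\<bar> * exp Lam * N * vol_ball u0)^2 * r0^6"
proof -
  define B where "B = \<bar>q\<bar> * exp Lam * N * vol_ball u0"
  have kinetic: "s^2 * rho_kin f s * (r0 + s)^2 \<le> 4 * r0^4 * (N * sqrt (1 + u0^2) * vol_ball u0)"
  proof (cases "s < r0")
    case True
    have "s^2 * (r0 + s)^2 \<le> r0^2 * (2 * r0)^2"
      using True assms by (intro mult_mono power_mono) auto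
    then have "s^2 * (r0 + s)^2 \<le> 4 * r0^4" by (simp add: power_mult_distrib eval_nat_numeral)
    then have "rho_kin f s * (s^2 * (r0 + s)^2) \<le> (N * sqrt (1 + u0^2) * vol_ball u0) * (4 * r0^4)"
      by (rule mult_mono[OF rho_kin_le]) (simp_all add: N_nonneg)
    then show ?thesis by (simp add: mult_ac)
  next
    case False
    then show ?thesis using rho_kin_eq_0 N_nonneg by simp
  qed
  have field: "exp (2 * lam s) * (s * \<bar>e s\<bar> * (r0 + s))^2 \<le> exp (2 * Lam) * (2 * B * r0^3)^2"
  proof (rule mult_mono)
    show "(s * \<bar>e s\<bar> * (r0 + s))^2 \<le> (2 * B * r0^3)^2"
      using e_decay[OF assms] assms r0_pos by (intro power_mono) (simp_all add: B_def)
  qed (use lam_le[of s] assms in auto)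
  have "(s * \<bar>e s\<bar> * (r0 + s))^2 = s^2 * (e s)^2 * (r0 + s)^2"
    by (simp add: power_mult_distrib)
  then have "s^2 * rho f lam e s * (r0 + s)^2
      = s^2 * rho_kin f s * (r0 + s)^2 + exp (2 * lam s) * (s * \<bar>e s\<bar> * (r0 + s))^2 / 2"
    by (simp add: rho_def algebra_simps)
  also have "\<dots> \<le> 4 * r0^4 * (N * sqrt (1 + u0^2) * vol_ball u0) + exp (2 * Lam) * (2 * B * r0^3)^2 / 2"
    using kinetic field by simp
  finally show ?thesis by (simp add: B_def power_mult_distrib mult_ac)
qed

lemma mass_le:
  assumes "0 \<le> r"
  shows "mass f lam e r \<le> 16 * pi * r0^3 * sqrt (1 + u0^2) * vol_ball u0 * N
    + 8 * pi * r0^5 * exp (2 * Lam) * (\<bar>q\<bar> * exp Lam * vol_ball u0)^2 * N^2"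
proof -
  obtain lam' where lam: "C1_halfline lam lam'"
    and eq: "\<And>r. 0 < r \<Longrightarrow>
      exp (-2 * lam r) * (2 * r * lam' r - 1) + 1 = 8 * pi * r^2 * rho f lam e r"
    using lam_equation by blast
  define W where "W = 4 * pi * (4 * r0^4 * (N * sqrt (1 + u0^2) * vol_ball u0)
    + 2 * exp (2 * Lam) * (\<bar>q\<bar> * exp Lam * N * vol_ball u0)^2 * r0^6)"
  have "(\<lambda>s. s * (1 - exp (-2 * lam s)) / 2) r - (\<lambda>s. s * (1 - exp (-2 * lam s)) / 2) 0 \<le> W / r0"
  proof (rule increment_le_of_DERIV_le_inverse_square[OF _ _ _ _ r0_pos assms])
    show "continuous_on {0..r} (\<lambda>s. s * (1 - exp (-2 * lam s)) / 2)"
      by (intro continuous_intros continuous_on_subset[OF C1_halfline_continuous_on[OF lam]]) auto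
    show "((\<lambda>s. s * (1 - exp (-2 * lam s)) / 2) has_real_derivative 4 * pi * x^2 * rho f lam e x) (at x)"
      if "0 < x" for x
      by (rule mass_function_DERIV[OF C1_halfline_DERIV[OF lam that] eq[OF that]])
    show "4 * pi * x^2 * rho f lam e x \<le> W / (r0 + x)^2" if "0 < x" for x
      using rho_weighted_le[OF that] that r0_pos
      by (simp add: W_def pos_le_divide_eq mult.assoc mult_left_mono)
    show "0 \<le> W" unfolding W_def using N_nonneg r0_pos by simp
  qed
  then have "mass f lam e r \<le> W / r0" by (simp add: mass_eq[OF assms])
  also have "W / r0 = 16 * pi * r0^3 * sqrt (1 + u0^2) * vol_ball u0 * N
    + 8 * pi * r0^5 * exp (2 * Lam) * (\<bar>q\<bar> * exp Lam * vol_ball u0)^2 * N^2"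
    unfolding W_def using r0_pos by (simp add: field_simps power_mult_distrib eval_nat_numeral)
  finally show ?thesis .
qed

end

theorem proposition4p1:
  fixes q r0 u0 Lam :: real
  assumes "r0 > 0" and "u0 > 0" and "Lam > 0"
  shows "\<exists>C>0. \<forall>f lam mu e. in_D q r0 u0 Lam f lam mu e \<longrightarrow>
           (\<forall>r\<ge>0. \<bar>e r\<bar> \<le> C * sup_norm f \<and>
                   \<bar>mu r\<bar> \<le> C * sup_norm f * (1 + sup_norm f) \<and>
                   \<bar>mass f lam e r\<bar> \<le> C * sup_norm f * (1 + sup_norm f))"
proof -
  define c_e where "c_e = \<bar>q\<bar> * exp Lam * vol_ball u0 * r0"
  define c_mu where "c_mu = exp (2 * Lam) * 4 * pi * r0^2 * u0^2 * vol_ball u0"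
  define c_m1 where "c_m1 = 16 * pi * r0^3 * sqrt (1 + u0^2) * vol_ball u0"
  define c_m2 where "c_m2 = 8 * pi * r0^5 * exp (2 * Lam) * (\<bar>q\<bar> * exp Lam * vol_ball u0)^2"
  define C where "C = 1 + c_e + c_mu + c_m1 + c_m2"
  have "0 \<le> c_e" "0 \<le> c_mu" "0 \<le> c_m1" "0 \<le> c_m2"
    using assms(1) by (simp_all add: c_e_def c_mu_def c_m1_def c_m2_def)
  then have "0 < C" and le_C: "c_e \<le> C" "c_mu \<le> C" "c_m1 \<le> C" "c_m2 \<le> C"
    by (simp_all add: C_def)
  moreover have "\<bar>e r\<bar> \<le> C * sup_norm f \<and> \<bar>mu r\<bar> \<le> C * sup_norm f * (1 + sup_norm f) \<and>
      \<bar>mass f lam e r\<bar> \<le> C * sup_norm f * (1 + sup_norm f)"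
    if "in_D q r0 u0 Lam f lam mu e" and r: "0 \<le> r" for f lam mu e r
  proof -
    interpret D_element q r0 u0 Lam f lam mu e using assms(1) that(1) by unfold_locales
    have "c_e * N \<le> C * N" "c_mu * N \<le> C * N" "c_m1 * N \<le> C * N" "c_m2 * N^2 \<le> C * N^2"
      using le_C N_nonneg by (simp_all add: mult_right_mono)
    moreover have "C * N \<le> C * N * (1 + N)" "C * N * (1 + N) = C * N + C * N^2"
      using \<open>0 < C\<close> N_nonneg by (simp_all add: algebra_simps power2_eq_square)
    ultimately show ?thesis
      using abs_e_le[OF r] mu_abs_le[OF r] mass_nonneg[OF r] mass_le[OF r]
      unfolding c_e_def c_mu_def c_m1_def c_m2_def by linarith
  qed
  ultimately show ?thesis by blast
qed

end
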